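(* Every $2$-uniform projective Hjelmslev plane is isomorphic to an incidence structure produced by the Construction (Algorithm 1) described in the context, for a suitable integer $m\ge 2$, projective plane $\mathcal{P}$ of order $m$, affine planes $\mathcal{A}_P$, orthogonal arrays $\mathcal{O}_l$, and admissible choices $\pi,\beta$.
   Context: An orthogonal array $OA(2,k,v)$ is a $v^2\times k$ array with entries from a $v$-element symbol set such that in any two columns every ordered pair of symbols occurs in exactly one row. A projective plane of order $m$ has $m+1$ points on each line and $m+1$ lines through each point; an affine plane of order $m$ has $m^2$ points, $m$ points per line, and its lines split into $m+1$ parallel classes, each consisting of $m$ pairwise disjoint lines covering all points. Construction (Algorithm 1). Let $\mathcal{P}$ be a projective plane of order $m$. For each point $P$ of $\mathcal{P}$ let $\mathcal{A}_P$ be an affine plane of order $m$ (not necessarily all the same). For each line $l$ of $\mathcal{P}$ let $\mathcal{O}_l$ be an $OA(2,m+1,m)$ on a symbol set $\Sigma_l$ whose $m+1$ columns are labelled bijectively by the $m+1$ points of $l$. For each incident pair $P\in l$ choose a parallel class $\pi(P,l)$ of $\mathcal{A}_P$ such that, for each fixed $P$, the map $l\mapsto\pi(P,l)$ is a bijection from the $m+1$ lines of $\mathcal{P}$ through $P$ to the $m+1$ parallel classes of $\mathcal{A}_P$; and choose a bijection $\beta_{P,l}$ from $\Sigma_l$ to the $m$ lines of $\pi(P,l)$. The points of the constructed structure are the pairs $(P,x)$ with $P$ a point of $\mathcal{P}$ and $x$ a point of $\mathcal{A}_P$. For each line $l$ of $\mathcal{P}$ and each row $r$ of $\mathcal{O}_l$,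 there is the line $\bigcup_{P\in l}\{(P,x): x\in \beta_{P,l}(\mathcal{O}_l(r,P))\}$, where $\mathcal{O}_l(r,P)$ is the entry in row $r$ and the column labelled $P$. Incidence is membership. Projective Hjelmslev plane: an incidence structure $\mathcal{H}$ such that (1) any two points are incident with at least one line; (2) any two lines meet in at least one point; (3) two lines meeting in more than one point are called neighbours; (4) two points incident with more than one common line are called neighbours; (5) there is an incidence-preserving surjection $\phi$ from $\mathcal{H}$ onto an ordinary projective plane with $\phi(P)=\phi(Q)\iff P\sim Q$ for points and $\phi(g)=\phi(h)\iff g\sim h$ for lines (where $\sim$ is the neighbour relation, reflexively extended). Affine Hjelmslev plane: an incidence structure such that any two points are incident with at least one line, lines meeting in more than one point are neighbours, and there is an incidence-preserving surjection $\phi$ onto an ordinary affine plane with $\phi(P)=\phi(Q)\iff P\sim Q$, $\phi(g)=\phi(h)\iff g\sim h$, and lines with no common point mapped to parallel lines. Uniformity: a $1$-uniform projective (resp. affine) Hjelmslev plane is an ordinary projective (resp. affine) plane. For a point $P$, the point-neighbourhood restriction $\bar P$ is the incidence structure whose points are the points $Q\sim P$ and whose lines are the nonempty sets $g\cap\bar P$ for lines $g$ of $\mathcal{H}$. A projective (resp. affine) Hjelmslev plane is $n$-uniform if for every point $P$, $\bar P$ is an $(n-1)$-uniform affine Hjelmslev plane, and every line of $\bar P$ is the restriction of the same number of lines of $\mathcal{H}$. *)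

theory Defs
  imports Main
begin

text \<open>An incidence structure is given by a point set, a line set and an incidence
relation.  Lines are abstract (possibly repeated point sets).\<close>

definition points_on :: "'p set \<Rightarrow> ('p \<Rightarrow> 'l \<Rightarrow> bool) \<Rightarrow> 'l \<Rightarrow> 'p set" where
  "points_on Pts I l = {P \<in> Pts. I P l}"

definition lines_through :: "'l set \<Rightarrow> ('p \<Rightarrow> 'l \<Rightarrow> bool) \<Rightarrow> 'p \<Rightarrow> 'l set" where
  "lines_through Lns I P = {l \<in> Lns. I P l}"

definition collinear :: "'l set \<Rightarrow> ('p \<Rightarrow> 'l \<Rightarrow> bool) \<Rightarrow> 'p set \<Rightarrow> bool" where
  "collinear Lns I S \<longleftrightarrow> (\<exists>l\<in>Lns. \<forall>P\<in>S. I P l)"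

definition pnb :: "'p set \<Rightarrow> 'l set \<Rightarrow> ('p \<Rightarrow> 'l \<Rightarrow> bool) \<Rightarrow> 'p \<Rightarrow> 'p \<Rightarrow> bool" where
  "pnb Pts Lns I P Q \<longleftrightarrow> P = Q \<or>
     (\<exists>g\<in>Lns. \<exists>h\<in>Lns. g \<noteq> h \<and> I P g \<and> I Q g \<and> I P h \<and> I Q h)"

definition lnb :: "'p set \<Rightarrow> 'l set \<Rightarrow> ('p \<Rightarrow> 'l \<Rightarrow> bool) \<Rightarrow> 'l \<Rightarrow> 'l \<Rightarrow> bool" where
  "lnb Pts Lns I g h \<longleftrightarrow> g = h \<or>
     (\<exists>P\<in>Pts. \<exists>Q\<in>Pts. P \<noteq> Q \<and> I P g \<and> I P h \<and> I Q g \<and> I Q h)"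

definition projective_plane :: "'p set \<Rightarrow> 'l set \<Rightarrow> ('p \<Rightarrow> 'l \<Rightarrow> bool) \<Rightarrow> bool" where
  "projective_plane Pts Lns I \<longleftrightarrow>
     (\<forall>P\<in>Pts. \<forall>Q\<in>Pts. P \<noteq> Q \<longrightarrow> (\<exists>!l. l \<in> Lns \<and> I P l \<and> I Q l)) \<and>
     (\<forall>g\<in>Lns. \<forall>h\<in>Lns. g \<noteq> h \<longrightarrow> (\<exists>!P. P \<in> Pts \<and> I P g \<and> I P h)) \<and>
     (\<exists>S\<subseteq>Pts. card S = 4 \<and> (\<forall>T\<subseteq>S. card T = 3 \<longrightarrow> \<not> collinear Lns I T))"

definition projective_plane_of_order ::
    "nat \<Rightarrow> 'p set \<Rightarrow> 'l set \<Rightarrow> ('p \<Rightarrow> 'l \<Rightarrow> bool) \<Rightarrow> bool" where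
  "projective_plane_of_order m Pts Lns I \<longleftrightarrow> projective_plane Pts Lns I \<and>
     (\<forall>l\<in>Lns. card (points_on Pts I l) = m + 1) \<and>
     (\<forall>P\<in>Pts. card (lines_through Lns I P) = m + 1)"

definition parallel :: "'p set \<Rightarrow> ('p \<Rightarrow> 'l \<Rightarrow> bool) \<Rightarrow> 'l \<Rightarrow> 'l \<Rightarrow> bool" where
  "parallel Pts I g h \<longleftrightarrow> g = h \<or> \<not> (\<exists>P\<in>Pts. I P g \<and> I P h)"

definition affine_plane :: "'p set \<Rightarrow> 'l set \<Rightarrow> ('p \<Rightarrow> 'l \<Rightarrow> bool) \<Rightarrow> bool" where
  "affine_plane Pts Lns I \<longleftrightarrow>
     (\<forall>P\<in>Pts. \<forall>Q\<in>Pts. P \<noteq> Q \<longrightarrow> (\<exists>!l. l \<in> Lns \<and> I P l \<and> I Q l)) \<and>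
     (\<forall>l\<in>Lns. \<forall>P\<in>Pts. \<not> I P l \<longrightarrow>
        (\<exists>!h. h \<in> Lns \<and> I P h \<and> \<not> (\<exists>Q\<in>Pts. I Q h \<and> I Q l))) \<and>
     (\<forall>l\<in>Lns. \<exists>P\<in>Pts. \<exists>Q\<in>Pts. P \<noteq> Q \<and> I P l \<and> I Q l) \<and>
     (\<exists>S\<subseteq>Pts. card S = 3 \<and> \<not> collinear Lns I S)"

definition affine_plane_of_order ::
    "nat \<Rightarrow> 'p set \<Rightarrow> 'l set \<Rightarrow> ('p \<Rightarrow> 'l \<Rightarrow> bool) \<Rightarrow> bool" where
  "affine_plane_of_order m Pts Lns I \<longleftrightarrow> affine_plane Pts Lns I \<and>
     finite Pts \<and> card Pts = m ^ 2 \<and>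
     (\<forall>l\<in>Lns. card (points_on Pts I l) = m)"

definition parallel_classes :: "'p set \<Rightarrow> 'l set \<Rightarrow> ('p \<Rightarrow> 'l \<Rightarrow> bool) \<Rightarrow> 'l set set" where
  "parallel_classes Pts Lns I = {{h \<in> Lns. parallel Pts I g h} | g. g \<in> Lns}"

text \<open>The target projective plane of the epimorphism is taken on the same carrier
types; this is no restriction since its point/line sets are images of Pts/Lns.\<close>

definition proj_hjelmslev_plane :: "'p set \<Rightarrow> 'l set \<Rightarrow> ('p \<Rightarrow> 'l \<Rightarrow> bool) \<Rightarrow> bool" where
  "proj_hjelmslev_plane Pts Lns I \<longleftrightarrow>
     (\<forall>P\<in>Pts. \<forall>Q\<in>Pts. \<exists>g\<in>Lns. I P g \<and> I Q g) \<and>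
     (\<forall>g\<in>Lns. \<forall>h\<in>Lns. \<exists>P\<in>Pts. I P g \<and> I P h) \<and>
     (\<exists>(Pts' :: 'p set) (Lns' :: 'l set) I' (\<phi> :: 'p \<Rightarrow> 'p) (\<psi> :: 'l \<Rightarrow> 'l).
        projective_plane Pts' Lns' I' \<and>
        \<phi> ` Pts = Pts' \<and> \<psi> ` Lns = Lns' \<and>
        (\<forall>P\<in>Pts. \<forall>g\<in>Lns. I P g \<longrightarrow> I' (\<phi> P) (\<psi> g)) \<and>
        (\<forall>P\<in>Pts. \<forall>Q\<in>Pts. \<phi> P = \<phi> Q \<longleftrightarrow> pnb Pts Lns I P Q) \<and>
        (\<forall>g\<in>Lns. \<forall>h\<in>Lns. \<psi> g = \<psi> h \<longleftrightarrow> lnb Pts Lns I g h))"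

definition nbhd_points :: "'p set \<Rightarrow> 'l set \<Rightarrow> ('p \<Rightarrow> 'l \<Rightarrow> bool) \<Rightarrow> 'p \<Rightarrow> 'p set" where
  "nbhd_points Pts Lns I P = {Q \<in> Pts. pnb Pts Lns I Q P}"

definition restr_line :: "'p set \<Rightarrow> 'l set \<Rightarrow> ('p \<Rightarrow> 'l \<Rightarrow> bool) \<Rightarrow> 'p \<Rightarrow> 'l \<Rightarrow> 'p set" where
  "restr_line Pts Lns I P g = {Q \<in> nbhd_points Pts Lns I P. I Q g}"

definition nbhd_lines :: "'p set \<Rightarrow> 'l set \<Rightarrow> ('p \<Rightarrow> 'l \<Rightarrow> bool) \<Rightarrow> 'p \<Rightarrow> 'p set set" where
  "nbhd_lines Pts Lns I P =
     {restr_line Pts Lns I P g | g. g \<in> Lns \<and> restr_line Pts Lns I P g \<noteq> {}}"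

text \<open>A 1-uniform affine Hjelmslev plane is an ordinary affine plane.\<close>

definition uniform1_affine_hjelmslev :: "'p set \<Rightarrow> 'p set set \<Rightarrow> bool" where
  "uniform1_affine_hjelmslev Pts Lns \<longleftrightarrow> affine_plane Pts Lns (\<lambda>x L. x \<in> L)"

definition uniform2_proj_hjelmslev :: "'p set \<Rightarrow> 'l set \<Rightarrow> ('p \<Rightarrow> 'l \<Rightarrow> bool) \<Rightarrow> bool" where
  "uniform2_proj_hjelmslev Pts Lns I \<longleftrightarrow> proj_hjelmslev_plane Pts Lns I \<and>
     (\<forall>P\<in>Pts. uniform1_affine_hjelmslev (nbhd_points Pts Lns I P) (nbhd_lines Pts Lns I P) \<and>
        (\<exists>c. \<forall>L\<in>nbhd_lines Pts Lns I P.
               card {g \<in> Lns. restr_line Pts Lns I P g = L} = c))"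

definition orthogonal_array ::
    "nat \<Rightarrow> nat \<Rightarrow> 'r set \<Rightarrow> 'c set \<Rightarrow> 's set \<Rightarrow> ('r \<Rightarrow> 'c \<Rightarrow> 's) \<Rightarrow> bool" where
  "orthogonal_array k v R C S A \<longleftrightarrow>
     finite R \<and> card R = v ^ 2 \<and> finite C \<and> card C = k \<and> finite S \<and> card S = v \<and>
     (\<forall>r\<in>R. \<forall>c\<in>C. A r c \<in> S) \<and>
     (\<forall>c1\<in>C. \<forall>c2\<in>C. c1 \<noteq> c2 \<longrightarrow>
        (\<forall>s1\<in>S. \<forall>s2\<in>S. \<exists>!r. r \<in> R \<and> A r c1 = s1 \<and> A r c2 = s2))"

text \<open>Data: projective plane (PP,PL,PI) of order m; affine planes (AP P, AL P) with
lines as point sets; OA on symbol set Sig l with rows Rows l and entries OA l r P;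
parallel-class choice pi and bijections beta.\<close>

definition alg1_data ::
    "nat \<Rightarrow> 'a set \<Rightarrow> 'b set \<Rightarrow> ('a \<Rightarrow> 'b \<Rightarrow> bool) \<Rightarrow> ('a \<Rightarrow> 'c set) \<Rightarrow> ('a \<Rightarrow> 'c set set)
     \<Rightarrow> ('b \<Rightarrow> 's set) \<Rightarrow> ('b \<Rightarrow> 'r set) \<Rightarrow> ('b \<Rightarrow> 'r \<Rightarrow> 'a \<Rightarrow> 's)
     \<Rightarrow> ('a \<Rightarrow> 'b \<Rightarrow> 'c set set) \<Rightarrow> ('a \<Rightarrow> 'b \<Rightarrow> 's \<Rightarrow> 'c set) \<Rightarrow> bool" where
  "alg1_data m PP PL PI AP AL Sig Rows OA pi beta \<longleftrightarrow>
     projective_plane_of_order m PP PL PI \<and>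
     (\<forall>P\<in>PP. affine_plane_of_order m (AP P) (AL P) (\<lambda>x L. x \<in> L) \<and> AL P \<subseteq> Pow (AP P)) \<and>
     (\<forall>l\<in>PL. orthogonal_array (m + 1) m (Rows l) (points_on PP PI l) (Sig l) (OA l)) \<and>
     (\<forall>P\<in>PP. bij_betw (pi P) (lines_through PL PI P)
                (parallel_classes (AP P) (AL P) (\<lambda>x L. x \<in> L))) \<and>
     (\<forall>P\<in>PP. \<forall>l\<in>PL. PI P l \<longrightarrow> bij_betw (beta P l) (Sig l) (pi P l))"

definition alg1_points :: "'a set \<Rightarrow> ('a \<Rightarrow> 'c set) \<Rightarrow> ('a \<times> 'c) set" where
  "alg1_points PP AP = Sigma PP AP"

definition alg1_lines ::
    "'a set \<Rightarrow> 'b set \<Rightarrow> ('a \<Rightarrow> 'b \<Rightarrow> bool) \<Rightarrow> ('b \<Rightarrow> 'r set) \<Rightarrow> ('b \<Rightarrow> 'r \<Rightarrow> 'a \<Rightarrow> 's)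
     \<Rightarrow> ('a \<Rightarrow> 'b \<Rightarrow> 's \<Rightarrow> 'c set) \<Rightarrow> ('a \<times> 'c) set set" where
  "alg1_lines PP PL PI Rows OA beta =
     {(\<Union>P\<in>points_on PP PI l. {P} \<times> beta P l (OA l r P)) | l r. l \<in> PL \<and> r \<in> Rows l}"

definition isomorphic ::
    "'p set \<Rightarrow> 'l set \<Rightarrow> ('p \<Rightarrow> 'l \<Rightarrow> bool) \<Rightarrow> 'q set \<Rightarrow> 'k set \<Rightarrow> ('q \<Rightarrow> 'k \<Rightarrow> bool) \<Rightarrow> bool" where
  "isomorphic Pts Lns I Pts' Lns' I' \<longleftrightarrow>
     (\<exists>f g. bij_betw f Pts Pts' \<and> bij_betw g Lns Lns' \<and>
        (\<forall>P\<in>Pts. \<forall>l\<in>Lns. I P l \<longleftrightarrow> I' (f P) (g l)))"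

end

(*
  Let phi, psi be the epimorphism of the 2-uniform plane H onto the projective plane P.  The
  fibre of H over a point x of P, with the traces of the lines of H on it, is the
  neighbourhood of any of its points and hence an affine plane; two traces are parallel iff
  the lines carrying them lie over the same line of P, so the parallel classes of the fibre
  correspond to the lines of P through x.  A line of H over a line y of P is determined by
  its traces on two different fibres over y, and any two such traces are realised by a
  line over y.  Counting these lines shows that all fibres have the same order m, that P
  has order m, and that the lines over y, read as rows indexed by their traces, form an
  OA(2, m + 1, m) on the points of y.  The map Q \<mapsto> (phi Q, Q) then sends every line of H
  onto the union of its traces, which is the line of Algorithm 1 given by the corresponding
  row.
*)

theory Submission
  imports Defs
begin

lemma ex1_unique: "\<exists>!x. P x \<Longrightarrow> P a \<Longrightarrow> P b \<Longrightarrow> a = b"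
  by blast

section \<open>Finite affine planes\<close>

locale finite_affine_plane =
  fixes C :: "'a set" and L :: "'a set set"
  assumes affine: "affine_plane C L (\<lambda>x l. x \<in> l)"
    and lines_subset: "L \<subseteq> Pow C"
    and finite_points: "finite C"
begin

lemma line_subset: "l \<in> L \<Longrightarrow> l \<subseteq> C"
  using lines_subset by blast

lemma finite_line: "l \<in> L \<Longrightarrow> finite l"
  using line_subset finite_points finite_subset by blast

lemma finite_lines: "finite L"
  using lines_subset finite_points by (meson finite_Pow_iff finite_subset)

lemmas affine_axioms = affine[unfolded affine_plane_def]

lemma ex1_line_through:
  "P \<in> C \<Longrightarrow> Q \<in> C \<Longrightarrow> P \<noteq> Q \<Longrightarrow> \<exists>!l. l \<in> L \<and> P \<in> l \<and> Q \<in> l"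
  using affine_axioms[THEN conjunct1] by blast

lemma ex_line_through: "P \<in> C \<Longrightarrow> Q \<in> C \<Longrightarrow> P \<noteq> Q \<Longrightarrow> \<exists>l\<in>L. P \<in> l \<and> Q \<in> l"
  using ex1_line_through[THEN ex1_implies_ex] by blast

lemma line_unique:
  assumes "l \<in> L" "l' \<in> L" "P \<in> l" "Q \<in> l" "P \<in> l'" "Q \<in> l'" "P \<noteq> Q"
  shows "l = l'"
proof -
  have "P \<in> C" "Q \<in> C" using assms line_subset by auto
  then show ?thesis by (rule ex1_unique[OF ex1_line_through]) (use assms in auto)
qed

lemma parallel_through_unique:
  assumes "l \<in> L" "P \<in> C" "P \<notin> l"
  shows "\<exists>!h. h \<in> L \<and> P \<in> h \<and> h \<inter> l = {}"
proof -
  have "\<exists>!h. h \<in> L \<and> P \<in> h \<and> \<not> (\<exists>Q\<in>C. Q \<in> h \<and> Q \<in> l)"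
    using affine_axioms[THEN conjunct2, THEN conjunct1] assms by blast
  moreover have "(h \<in> L \<and> P \<in> h \<and> \<not> (\<exists>Q\<in>C. Q \<in> h \<and> Q \<in> l)) \<longleftrightarrow>
      (h \<in> L \<and> P \<in> h \<and> h \<inter> l = {})" for h
    using line_subset by blast
  ultimately show ?thesis by (simp only:)
qed

lemma two_points_on_line: "l \<in> L \<Longrightarrow> \<exists>P Q. P \<noteq> Q \<and> P \<in> l \<and> Q \<in> l"
  using affine_axioms[THEN conjunct2, THEN conjunct2, THEN conjunct1] by blast

lemma non_collinear_triple:
  "\<exists>A B D. A \<in> C \<and> B \<in> C \<and> D \<in> C \<and> A \<noteq> B \<and> B \<noteq> D \<and> A \<noteq> D \<and>
     \<not> (\<exists>l\<in>L. A \<in> l \<and> B \<in> l \<and> D \<in> l)"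
proof -
  obtain S where S: "S \<subseteq> C" "card S = 3" "\<not> collinear L (\<lambda>x l. x \<in> l) S"
    using affine_axioms[THEN conjunct2, THEN conjunct2, THEN conjunct2] by blast
  then obtain A B D where "S = {A, B, D}" "A \<noteq> B" "B \<noteq> D" "A \<noteq> D"
    using card_3_iff by metis
  then show ?thesis using S unfolding collinear_def by auto
qed

definition par :: "'a set \<Rightarrow> 'a set \<Rightarrow> bool" where
  "par g h \<longleftrightarrow> g = h \<or> g \<inter> h = {}"

definition pclass :: "'a set \<Rightarrow> 'a set set" where
  "pclass g = {h \<in> L. par g h}"

lemma parallel_classes_eq: "parallel_classes C L (\<lambda>x l. x \<in> l) = pclass ` L"
proof -
  have "parallel C (\<lambda>x l. x \<in> l) g h = par g h" if "g \<in> L" "h \<in> L" for g h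
    using that line_subset unfolding parallel_def par_def by blast
  then show ?thesis unfolding parallel_classes_def pclass_def by blast
qed

lemma par_sym: "par g h \<Longrightarrow> par h g"
  unfolding par_def by blast

lemma par_trans:
  assumes "g \<in> L" "h \<in> L" "k \<in> L" "par g h" "par h k"
  shows "par g k"
proof (rule ccontr)
  assume "\<not> par g k"
  then obtain P where P: "P \<in> g" "P \<in> k" "g \<noteq> k" unfolding par_def by blast
  have "P \<in> C" using P assms line_subset by blast
  show False
  proof (cases "P \<in> h")
    case True
    then show False using assms P unfolding par_def by blast
  next
    case False
    then have "g \<inter> h = {}" "k \<inter> h = {}" using assms P unfolding par_def by blast+
    then have "g = k" using parallel_through_unique[OF assms(2) \<open>P \<in> C\<close> False] assms P by blast
    then show False using P by simp
  qed
qed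

lemma self_in_pclass: "g \<in> L \<Longrightarrow> g \<in> pclass g"
  unfolding pclass_def par_def by blast

lemma pclass_eq_iff:
  assumes "g \<in> L" "h \<in> L"
  shows "pclass g = pclass h \<longleftrightarrow> par g h"
proof
  assume "pclass g = pclass h"
  then show "par g h" using self_in_pclass[OF assms(2)] unfolding pclass_def by blast
next
  assume "par g h"
  then show "pclass g = pclass h"
    unfolding pclass_def using assms par_trans par_sym by blast
qed

lemma pclass_of_member: "g \<in> L \<Longrightarrow> h \<in> pclass g \<Longrightarrow> pclass h = pclass g"
  using pclass_eq_iff par_sym unfolding pclass_def by blast

lemma pclass_covers:
  assumes "g \<in> L" "P \<in> C"
  shows "\<exists>l\<in>pclass g. P \<in> l"
proof (cases "P \<in> g")
  case True
  then show ?thesis using self_in_pclass assms by blast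
next
  case False
  then obtain h where "h \<in> L" "P \<in> h" "h \<inter> g = {}"
    using parallel_through_unique[OF assms(1,2)] by blast
  then show ?thesis unfolding pclass_def par_def by blast
qed

lemma pclass_disjoint:
  assumes "g \<in> L" "l \<in> pclass g" "l' \<in> pclass g" "P \<in> l" "P \<in> l'"
  shows "l = l'"
proof -
  have "par l l'" using assms par_trans par_sym unfolding pclass_def by blast
  then show ?thesis using assms unfolding par_def by blast
qed

lemma Union_pclass: "g \<in> L \<Longrightarrow> \<Union>(pclass g) = C"
  using pclass_covers line_subset unfolding pclass_def by blast

lemma card_Int_nonparallel:
  assumes "g \<in> L" "h \<in> L" "\<not> par g h"
  shows "card (g \<inter> h) = 1"
proof -
  obtain P where "P \<in> g" "P \<in> h" using assms unfolding par_def by blast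
  moreover have "Q = P" if "Q \<in> g" "Q \<in> h" for Q
    using line_unique[of g h P Q] assms that \<open>P \<in> g\<close> \<open>P \<in> h\<close> unfolding par_def by blast
  ultimately have "g \<inter> h = {P}" by blast
  then show ?thesis by simp
qed

text \<open>The class of h partitions the plane, and g meets each of its lines exactly once.\<close>

lemma card_nonparallel_line_eq_card_pclass:
  assumes "g \<in> L" "h \<in> L" "\<not> par g h"
  shows "card g = card (pclass h)"
proof -
  have nonpar: "\<not> par g l" if "l \<in> pclass h" for l
    using that assms par_trans par_sym unfolding pclass_def by blast
  have "g = (\<Union>l\<in>pclass h. g \<inter> l)"
    using Union_pclass[OF assms(2)] line_subset[OF assms(1)] by blast
  also have "card \<dots> = (\<Sum>l\<in>pclass h. card (g \<inter> l))"
  proof (rule card_UN_disjoint)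
    show "finite (pclass h)" using finite_lines unfolding pclass_def by simp
    show "\<forall>l\<in>pclass h. finite (g \<inter> l)" using finite_line assms by blast
    show "\<forall>l\<in>pclass h. \<forall>l'\<in>pclass h. l \<noteq> l' \<longrightarrow> g \<inter> l \<inter> (g \<inter> l') = {}"
      using pclass_disjoint[OF assms(2)] by blast
  qed
  also have "\<dots> = card (pclass h)"
    using card_Int_nonparallel[OF assms(1)] nonpar unfolding pclass_def by simp
  finally show ?thesis .
qed

lemma ex_three_pairwise_nonparallel:
  "\<exists>g1 g2 g3. g1 \<in> L \<and> g2 \<in> L \<and> g3 \<in> L \<and> \<not> par g1 g2 \<and> \<not> par g1 g3 \<and> \<not> par g2 g3"
proof -
  obtain A B D where h: "A \<in> C" "B \<in> C" "D \<in> C" "A \<noteq> B" "B \<noteq> D" "A \<noteq> D"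
    "\<not> (\<exists>l\<in>L. A \<in> l \<and> B \<in> l \<and> D \<in> l)"
    using non_collinear_triple by blast
  obtain ab where ab: "ab \<in> L" "A \<in> ab" "B \<in> ab" using ex_line_through h by blast
  obtain ad where ad: "ad \<in> L" "A \<in> ad" "D \<in> ad" using ex_line_through h by blast
  obtain bd where bd: "bd \<in> L" "B \<in> bd" "D \<in> bd" using ex_line_through h by blast
  have "\<not> par ab ad" "\<not> par ab bd" "\<not> par ad bd"
    using ab ad bd h unfolding par_def by blast+
  then show ?thesis using ab ad bd by blast
qed

lemma ex_nonparallel_to_both:
  assumes "g \<in> L" "h \<in> L"
  shows "\<exists>k\<in>L. \<not> par k g \<and> \<not> par k h"
proof -
  obtain g1 g2 g3 where G: "g1 \<in> L" "g2 \<in> L" "g3 \<in> L" "\<not> par g1 g2" "\<not> par g1 g3" "\<not> par g2 g3"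
    using ex_three_pairwise_nonparallel by blast
  have "\<not> (par a x \<and> par b x)" if "a \<in> L" "b \<in> L" "x \<in> L" "\<not> par a b" for a b x
    using that par_trans par_sym by blast
  then show ?thesis using G assms by metis
qed

lemma card_pclass_eq: "g \<in> L \<Longrightarrow> h \<in> L \<Longrightarrow> card (pclass g) = card (pclass h)"
  using ex_nonparallel_to_both card_nonparallel_line_eq_card_pclass by metis

lemma card_line_eq_card_pclass: "g \<in> L \<Longrightarrow> h \<in> L \<Longrightarrow> card g = card (pclass h)"
  using ex_nonparallel_to_both[of g g] card_nonparallel_line_eq_card_pclass card_pclass_eq par_sym by metis

lemma card_line_ge_2: "g \<in> L \<Longrightarrow> 2 \<le> card g"
  using two_points_on_line finite_line
  by (metis card_2_iff card_mono empty_subsetI insert_subset)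

lemma card_points_eq_card_line_squared: "g \<in> L \<Longrightarrow> card C = card g * card g"
proof -
  assume g: "g \<in> L"
  have "card C = card (\<Union>(pclass g))" using Union_pclass[OF g] by simp
  also have "\<dots> = (\<Sum>l\<in>pclass g. card l)"
  proof (rule card_Union_disjoint)
    show "pairwise disjnt (pclass g)"
      unfolding pairwise_def disjnt_def using pclass_disjoint[OF g] by blast
    show "\<And>l. l \<in> pclass g \<Longrightarrow> finite l" using finite_line unfolding pclass_def by blast
  qed
  also have "\<dots> = card g * card g"
    using card_line_eq_card_pclass[of _ g] card_line_eq_card_pclass[OF g g] g unfolding pclass_def by simp
  finally show ?thesis .
qed

lemma bij_betw_pclass_lines_through:
  assumes Q: "Q \<in> C"
  shows "bij_betw pclass {l \<in> L. Q \<in> l} (pclass ` L)"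
  unfolding bij_betw_def
proof
  show "inj_on pclass {l \<in> L. Q \<in> l}"
    using pclass_disjoint self_in_pclass unfolding inj_on_def by (metis mem_Collect_eq)
  show "pclass ` {l \<in> L. Q \<in> l} = pclass ` L"
  proof
    show "pclass ` {l \<in> L. Q \<in> l} \<subseteq> pclass ` L" by blast
    show "pclass ` L \<subseteq> pclass ` {l \<in> L. Q \<in> l}"
    proof
      fix \<pi> assume "\<pi> \<in> pclass ` L"
      then obtain h where h: "h \<in> L" "\<pi> = pclass h" by blast
      then obtain l where l: "l \<in> pclass h" "Q \<in> l" using pclass_covers Q by blast
      then have "l \<in> {l \<in> L. Q \<in> l}" "pclass l = \<pi>"
        using pclass_of_member h unfolding pclass_def by auto
      then show "\<pi> \<in> pclass ` {l \<in> L. Q \<in> l}" by blast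
    qed
  qed
qed

text \<open>Counting the points other than a fixed point Q along the lines through Q, one
  line per parallel class.\<close>

lemma card_pclasses: "g \<in> L \<Longrightarrow> card (pclass ` L) = card g + 1"
proof -
  assume g: "g \<in> L"
  define s where "s = card g"
  have lines: "l \<in> L \<Longrightarrow> card l = s" for l using card_line_eq_card_pclass[OF _ g] card_line_eq_card_pclass[OF g g] s_def by simp
  obtain Q where Q: "Q \<in> C" using two_points_on_line[OF g] line_subset[OF g] by blast
  define T where "T = {l \<in> L. Q \<in> l}"
  have "bij_betw pclass T (pclass ` L)" unfolding T_def using bij_betw_pclass_lines_through[OF Q] .
  then have cardT: "card T = card (pclass ` L)" by (rule bij_betw_same_card)
  have "card (C - {Q}) = card (\<Union>l\<in>T. l - {Q})"
    using ex_line_through[OF Q] line_subset unfolding T_def by (intro arg_cong[where f = card]) blast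
  also have "\<dots> = (\<Sum>l\<in>T. card (l - {Q}))"
  proof (rule card_UN_disjoint)
    show "finite T" using finite_lines unfolding T_def by simp
    show "\<forall>l\<in>T. finite (l - {Q})" using finite_line unfolding T_def by blast
    show "\<forall>l\<in>T. \<forall>l'\<in>T. l \<noteq> l' \<longrightarrow> (l - {Q}) \<inter> (l' - {Q}) = {}"
      using line_unique unfolding T_def by blast
  qed
  also have "\<dots> = card T * (s - 1)" using lines finite_line unfolding T_def by simp
  finally have "card T * (s - 1) = s * s - 1"
    using card_points_eq_card_line_squared[OF g] Q finite_points s_def by simp
  also have "\<dots> = (s + 1) * (s - 1)" by (simp add: algebra_simps)
  finally have "card T * (s - 1) = (s + 1) * (s - 1)" .
  moreover have "s - 1 \<noteq> 0" using card_line_ge_2[OF g] s_def by simp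
  ultimately have "card T = s + 1" by (rule mult_right_cancel[THEN iffD1, rotated])
  then show ?thesis using cardT s_def by simp
qed

definition order :: nat where
  "order = card (pclass ` L) - 1"

lemma ex_line: "\<exists>g. g \<in> L"
  using ex_three_pairwise_nonparallel by blast

lemma card_line_order: "l \<in> L \<Longrightarrow> card l = order"
  using card_pclasses unfolding order_def by simp

lemma card_pclasses_order: "card (pclass ` L) = order + 1"
  using card_pclasses card_line_order ex_line by metis

lemma card_pclass_order: "\<pi> \<in> pclass ` L \<Longrightarrow> card \<pi> = order"
  using card_line_eq_card_pclass card_line_order by fastforce

lemma order_ge_2: "2 \<le> order"
  using card_line_ge_2 card_line_order ex_line by metis

lemma affine_plane_of_order: "affine_plane_of_order order C L (\<lambda>x l. x \<in> l)"
proof -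
  have "points_on C (\<lambda>x l. x \<in> l) l = l" if "l \<in> L" for l
    using that line_subset unfolding points_on_def by blast
  then show ?thesis
    unfolding affine_plane_of_order_def
    using affine finite_points card_points_eq_card_line_squared card_line_order ex_line
    by (metis power2_eq_square)
qed

end

section \<open>Isomorphisms of incidence structures\<close>

lemma ex1_image_iff:
  assumes "inj_on f A"
  shows "(\<exists>!y. y \<in> f ` A \<and> Q y) \<longleftrightarrow> (\<exists>!x. x \<in> A \<and> Q (f x))"
  using assms unfolding inj_on_def by blast

lemma ex_subset_image_iff:
  assumes "\<And>S. S \<subseteq> A \<Longrightarrow> Q (f ` S) \<longleftrightarrow> R S"
  shows "(\<exists>S\<subseteq>f ` A. Q S) \<longleftrightarrow> (\<exists>S\<subseteq>A. R S)"
  using assms by (metis subset_image_iff)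

locale incidence_iso =
  fixes P :: "'p set" and L :: "'l set" and I :: "'p \<Rightarrow> 'l \<Rightarrow> bool"
    and P2 :: "'q set" and L2 :: "'k set" and I2 :: "'q \<Rightarrow> 'k \<Rightarrow> bool"
    and e :: "'p \<Rightarrow> 'q" and c :: "'l \<Rightarrow> 'k"
  assumes points_bij: "bij_betw e P P2" and lines_bij: "bij_betw c L L2"
    and incidence_iff: "p \<in> P \<Longrightarrow> l \<in> L \<Longrightarrow> I2 (e p) (c l) \<longleftrightarrow> I p l"
begin

lemma points_eq: "P2 = e ` P" and lines_eq: "L2 = c ` L"
  using points_bij lines_bij unfolding bij_betw_def by simp_all

lemma inj_points: "inj_on e P" and inj_lines: "inj_on c L"
  using points_bij lines_bij unfolding bij_betw_def by simp_all

lemmas transfer_simps = points_eq lines_eq incidence_iff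
  ex1_image_iff[OF inj_points] ex1_image_iff[OF inj_lines]
  inj_on_eq_iff[OF inj_points] inj_on_eq_iff[OF inj_lines]

lemma collinear_image_iff: "T \<subseteq> P \<Longrightarrow> collinear L2 I2 (e ` T) \<longleftrightarrow> collinear L I T"
  unfolding collinear_def by (auto simp: transfer_simps subset_iff)

lemma card_image_points: "S \<subseteq> P \<Longrightarrow> card (e ` S) = card S"
  using card_image inj_points inj_on_subset by blast

lemma general_position_image_iff:
  assumes "S \<subseteq> P"
  shows "(\<forall>T\<subseteq>e ` S. card T = k \<longrightarrow> \<not> collinear L2 I2 T) \<longleftrightarrow>
    (\<forall>T\<subseteq>S. card T = k \<longrightarrow> \<not> collinear L I T)"
proof -
  have "card (e ` T) = card T \<and> (collinear L2 I2 (e ` T) \<longleftrightarrow> collinear L I T)" if "T \<subseteq> S" for T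
    using that assms card_image_points collinear_image_iff by blast
  then show ?thesis unfolding all_subset_image by auto
qed

lemma projective_plane_iff: "projective_plane P2 L2 I2 \<longleftrightarrow> projective_plane P L I"
proof -
  have "(\<exists>S\<subseteq>P2. card S = 4 \<and> (\<forall>T\<subseteq>S. card T = 3 \<longrightarrow> \<not> collinear L2 I2 T)) \<longleftrightarrow>
    (\<exists>S\<subseteq>P. card S = 4 \<and> (\<forall>T\<subseteq>S. card T = 3 \<longrightarrow> \<not> collinear L I T))"
    unfolding points_eq
    by (rule ex_subset_image_iff) (simp add: card_image_points general_position_image_iff)
  then show ?thesis
    unfolding projective_plane_def by (simp add: transfer_simps cong: conj_cong)
qed

lemma affine_plane_iff: "affine_plane P2 L2 I2 \<longleftrightarrow> affine_plane P L I"
proof -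
  have "(\<exists>S\<subseteq>P2. card S = 3 \<and> \<not> collinear L2 I2 S) \<longleftrightarrow> (\<exists>S\<subseteq>P. card S = 3 \<and> \<not> collinear L I S)"
    unfolding points_eq
    by (rule ex_subset_image_iff) (simp add: card_image_points collinear_image_iff)
  then show ?thesis
    unfolding affine_plane_def by (simp add: transfer_simps cong: conj_cong)
qed

lemma pnb_iff: "p \<in> P \<Longrightarrow> q \<in> P \<Longrightarrow> pnb P2 L2 I2 (e p) (e q) \<longleftrightarrow> pnb P L I p q"
  unfolding pnb_def by (simp add: transfer_simps cong: conj_cong)

lemma lnb_iff: "g \<in> L \<Longrightarrow> h \<in> L \<Longrightarrow> lnb P2 L2 I2 (c g) (c h) \<longleftrightarrow> lnb P L I g h"
  unfolding lnb_def by (simp add: transfer_simps cong: conj_cong)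

lemma mem_points_iff: "u \<in> P2 \<longleftrightarrow> (\<exists>p\<in>P. u = e p)"
  and mem_lines_iff: "k \<in> L2 \<longleftrightarrow> (\<exists>l\<in>L. k = c l)"
  unfolding points_eq lines_eq by blast+

lemma nbhd_points_image: "p \<in> P \<Longrightarrow> nbhd_points P2 L2 I2 (e p) = e ` nbhd_points P L I p"
  unfolding nbhd_points_def by (auto simp: mem_points_iff pnb_iff)

lemma restr_line_image:
  "p \<in> P \<Longrightarrow> g \<in> L \<Longrightarrow> restr_line P2 L2 I2 (e p) (c g) = e ` restr_line P L I p g"
  unfolding restr_line_def nbhd_points_image by (auto simp: incidence_iff nbhd_points_def)

lemma nbhd_lines_image:
  "p \<in> P \<Longrightarrow> nbhd_lines P2 L2 I2 (e p) = (\<lambda>S. e ` S) ` nbhd_lines P L I p"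
proof -
  assume p: "p \<in> P"
  have "nbhd_lines P2 L2 I2 (e p) =
      {restr_line P2 L2 I2 (e p) (c g) | g. g \<in> L \<and> restr_line P2 L2 I2 (e p) (c g) \<noteq> {}}"
    unfolding nbhd_lines_def mem_lines_iff by blast
  also have "\<dots> = {e ` restr_line P L I p g | g. g \<in> L \<and> restr_line P L I p g \<noteq> {}}"
    using restr_line_image[OF p] by (metis (lifting) image_is_empty)
  also have "\<dots> = (\<lambda>S. e ` S) ` nbhd_lines P L I p"
    unfolding nbhd_lines_def by blast
  finally show ?thesis .
qed

lemma isomorphic: "isomorphic P L I P2 L2 I2"
  unfolding isomorphic_def using points_bij lines_bij incidence_iff by blast

end

lemma incidence_iso_inv_into:
  assumes "inj_on e P" "inj_on c L"
  shows "incidence_iso P L I (e ` P) (c ` L) (\<lambda>u k. I (inv_into P e u) (inv_into L c k)) e c"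
  using assms by unfold_locales (simp_all add: inj_on_imp_bij_betw)

lemma incidence_iso_image_sets:
  assumes "inj_on e C" "L \<subseteq> Pow C"
  shows "incidence_iso C L (\<lambda>x l. x \<in> l) (e ` C) ((`) e ` L) (\<lambda>x l. x \<in> l) e ((`) e)"
proof
  show "bij_betw e C (e ` C)" using assms(1) by (simp add: inj_on_imp_bij_betw)
  have "inj_on ((`) e) L"
    using assms inj_on_image_eq_iff by (fastforce simp: inj_on_def)
  then show "bij_betw ((`) e) L ((`) e ` L)" by (simp add: inj_on_imp_bij_betw)
  show "x \<in> C \<Longrightarrow> l \<in> L \<Longrightarrow> e x \<in> e ` l \<longleftrightarrow> x \<in> l" for x l
    using assms inj_on_image_mem_iff[OF assms(1)] by blast
qed

lemma (in incidence_iso) nbhd_affine_iff: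
  assumes "p \<in> P"
  shows "affine_plane (nbhd_points P2 L2 I2 (e p)) (nbhd_lines P2 L2 I2 (e p)) (\<lambda>x l. x \<in> l) \<longleftrightarrow>
    affine_plane (nbhd_points P L I p) (nbhd_lines P L I p) (\<lambda>x l. x \<in> l)"
proof -
  have "inj_on e (nbhd_points P L I p)"
    by (rule inj_on_subset[OF inj_points]) (auto simp: nbhd_points_def)
  moreover have "nbhd_lines P L I p \<subseteq> Pow (nbhd_points P L I p)"
    unfolding nbhd_lines_def restr_line_def by blast
  ultimately show ?thesis
    unfolding nbhd_points_image[OF assms] nbhd_lines_image[OF assms]
    by (rule incidence_iso.affine_plane_iff[OF incidence_iso_image_sets])
qed

lemma isomorphic_trans:
  assumes "isomorphic P L I P2 L2 I2" "isomorphic P2 L2 I2 P3 L3 I3"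
  shows "isomorphic P L I P3 L3 I3"
proof -
  obtain f g where fg: "bij_betw f P P2" "bij_betw g L L2" "\<forall>p\<in>P. \<forall>l\<in>L. I p l = I2 (f p) (g l)"
    using assms(1) unfolding isomorphic_def by blast
  obtain f' g' where fg': "bij_betw f' P2 P3" "bij_betw g' L2 L3"
    "\<forall>p\<in>P2. \<forall>l\<in>L2. I2 p l = I3 (f' p) (g' l)"
    using assms(2) unfolding isomorphic_def by blast
  have "\<forall>p\<in>P. \<forall>l\<in>L. I p l = I3 ((f' \<circ> f) p) ((g' \<circ> g) l)"
  proof (intro ballI)
    fix p l assume "p \<in> P" "l \<in> L"
    moreover have "f p \<in> P2" "g l \<in> L2" using calculation fg(1,2) bij_betwE by blast+
    ultimately show "I p l = I3 ((f' \<circ> f) p) ((g' \<circ> g) l)" using fg(3) fg'(3) by simp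
  qed
  moreover have "bij_betw (f' \<circ> f) P P3" "bij_betw (g' \<circ> g) L L3"
    using bij_betw_trans fg fg' by blast+
  ultimately show ?thesis unfolding isomorphic_def by blast
qed

section \<open>Projective planes\<close>

locale proj_plane =
  fixes P :: "'a set" and L :: "'b set" and I :: "'a \<Rightarrow> 'b \<Rightarrow> bool"
  assumes projective: "projective_plane P L I"
begin

lemmas projective_axioms = projective[unfolded projective_plane_def]

lemma join_unique: "x \<in> P \<Longrightarrow> z \<in> P \<Longrightarrow> x \<noteq> z \<Longrightarrow> \<exists>!l. l \<in> L \<and> I x l \<and> I z l"
  using projective_axioms[THEN conjunct1] by blast

lemma meet_unique: "l \<in> L \<Longrightarrow> k \<in> L \<Longrightarrow> l \<noteq> k \<Longrightarrow> \<exists>!x. x \<in> P \<and> I x l \<and> I x k"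
  using projective_axioms[THEN conjunct2, THEN conjunct1] by blast

lemma join_exists: "x \<in> P \<Longrightarrow> z \<in> P \<Longrightarrow> x \<noteq> z \<Longrightarrow> \<exists>l\<in>L. I x l \<and> I z l"
  using join_unique[THEN ex1_implies_ex] by blast

lemma meet_exists: "l \<in> L \<Longrightarrow> k \<in> L \<Longrightarrow> l \<noteq> k \<Longrightarrow> \<exists>x\<in>P. I x l \<and> I x k"
  using meet_unique[THEN ex1_implies_ex] by blast

lemma line_eqI:
  assumes "x \<in> P" "z \<in> P" "x \<noteq> z" "l \<in> L" "k \<in> L" "I x l" "I z l" "I x k" "I z k"
  shows "l = k"
  by (rule ex1_unique[OF join_unique[OF assms(1-3)]]) (use assms in auto)

lemma point_eqI:
  assumes "l \<in> L" "k \<in> L" "l \<noteq> k" "x \<in> P" "z \<in> P" "I x l" "I x k" "I z l" "I z k"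
  shows "x = z"
  by (rule ex1_unique[OF meet_unique[OF assms(1-3)]]) (use assms in auto)

lemma ex_quadrangle: "\<exists>S\<subseteq>P. card S = 4 \<and> (\<forall>T\<subseteq>S. card T = 3 \<longrightarrow> \<not> collinear L I T)"
  using projective_axioms[THEN conjunct2, THEN conjunct2] .

lemma points_nonempty: "P \<noteq> {}"
  using ex_quadrangle by fastforce

lemma point_off_line:
  assumes "l \<in> L"
  shows "\<exists>z\<in>P. \<not> I z l"
proof (rule ccontr)
  assume "\<not> (\<exists>z\<in>P. \<not> I z l)"
  then have "collinear L I T" if "T \<subseteq> P" for T
    using that assms unfolding collinear_def by blast
  moreover obtain S where "S \<subseteq> P" "card S = 4" "\<forall>T\<subseteq>S. card T = 3 \<longrightarrow> \<not> collinear L I T"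
    using ex_quadrangle by blast
  moreover obtain T where "T \<subseteq> S" "card T = 3"
    using obtain_subset_with_card_n[of 3 S] \<open>card S = 4\<close> by auto
  ultimately show False by blast
qed

text \<open>Perspectivity from a point z off l: each point of l is joined to z.\<close>

lemma card_points_on_eq_card_lines_through:
  assumes l: "l \<in> L" and z: "z \<in> P" "\<not> I z l"
  shows "card (points_on P I l) = card (lines_through L I z)"
proof -
  define join where "join x = (THE k. k \<in> L \<and> I z k \<and> I x k)" for x
  have join: "join x \<in> L \<and> I z (join x) \<and> I x (join x)" if "x \<in> points_on P I l" for x
  proof -
    have "x \<in> P" "z \<noteq> x" using that z unfolding points_on_def by auto
    then show ?thesis unfolding join_def by (rule theI'[OF join_unique[OF z(1)]])
  qed
  have "bij_betw join (points_on P I l) (lines_through L I z)"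
    unfolding bij_betw_def
  proof
    show "inj_on join (points_on P I l)"
    proof (rule inj_onI)
      fix a b assume ab: "a \<in> points_on P I l" "b \<in> points_on P I l" "join a = join b"
      show "a = b"
      proof (rule ccontr)
        assume "a \<noteq> b"
        then have "l = join a"
          using line_eqI[of a b l "join a"] ab join[OF ab(1)] join[OF ab(2)] l
          unfolding points_on_def by auto
        then show False using join[OF ab(1)] z(2) by simp
      qed
    qed
    show "join ` points_on P I l = lines_through L I z"
    proof
      show "join ` points_on P I l \<subseteq> lines_through L I z"
        using join unfolding lines_through_def by blast
      show "lines_through L I z \<subseteq> join ` points_on P I l"
      proof
        fix k assume "k \<in> lines_through L I z"
        then have k: "k \<in> L" "I z k" unfolding lines_through_def by auto
        then have "k \<noteq> l" using z by auto
        then obtain x where x: "x \<in> P" "I x k" "I x l" using meet_exists[OF k(1) l] by blast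
        then have xl: "x \<in> points_on P I l" unfolding points_on_def by auto
        have "join x = k"
          using line_eqI[of z x "join x" k] z x k join[OF xl] by auto
        then show "k \<in> join ` points_on P I l" using xl by blast
      qed
    qed
  qed
  then show ?thesis by (rule bij_betw_same_card)
qed

end

section \<open>The fibres of a Hjelmslev plane over its projective image\<close>

locale hjelmslev_epimorphism =
  fixes Pts :: "'p set" and Lns :: "'l set" and I :: "'p \<Rightarrow> 'l \<Rightarrow> bool"
    and Pts' :: "'a set" and Lns' :: "'b set" and I' :: "'a \<Rightarrow> 'b \<Rightarrow> bool"
    and phi :: "'p \<Rightarrow> 'a" and psi :: "'l \<Rightarrow> 'b"
  assumes finite_points: "finite Pts" and finite_lines: "finite Lns"
    and points_joined: "P \<in> Pts \<Longrightarrow> Q \<in> Pts \<Longrightarrow> \<exists>g\<in>Lns. I P g \<and> I Q g"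
    and lines_meet: "g \<in> Lns \<Longrightarrow> h \<in> Lns \<Longrightarrow> \<exists>P\<in>Pts. I P g \<and> I P h"
    and target: "projective_plane Pts' Lns' I'"
    and phi_image: "phi ` Pts = Pts'" and psi_image: "psi ` Lns = Lns'"
    and incidence_preserved: "P \<in> Pts \<Longrightarrow> g \<in> Lns \<Longrightarrow> I P g \<Longrightarrow> I' (phi P) (psi g)"
    and phi_eq_iff: "P \<in> Pts \<Longrightarrow> Q \<in> Pts \<Longrightarrow> phi P = phi Q \<longleftrightarrow> pnb Pts Lns I P Q"
    and psi_eq_iff: "g \<in> Lns \<Longrightarrow> h \<in> Lns \<Longrightarrow> psi g = psi h \<longleftrightarrow> lnb Pts Lns I g h"
    and nbhd_affine:
      "P \<in> Pts \<Longrightarrow> affine_plane (nbhd_points Pts Lns I P) (nbhd_lines Pts Lns I P) (\<lambda>x l. x \<in> l)"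
begin

sublocale target: proj_plane Pts' Lns' I'
  by (rule proj_plane.intro[OF target])

lemma phi_in: "P \<in> Pts \<Longrightarrow> phi P \<in> Pts'"
  using phi_image by blast

lemma psi_in: "g \<in> Lns \<Longrightarrow> psi g \<in> Lns'"
  using psi_image by blast

lemma phi_eqI:
  assumes "P \<in> Pts" "Q \<in> Pts" "g \<in> Lns" "h \<in> Lns" "g \<noteq> h" "I P g" "I Q g" "I P h" "I Q h"
  shows "phi P = phi Q"
  using assms phi_eq_iff unfolding pnb_def by blast

lemma psi_eqI:
  assumes "g \<in> Lns" "h \<in> Lns" "P \<in> Pts" "Q \<in> Pts" "P \<noteq> Q" "I P g" "I P h" "I Q g" "I Q h"
  shows "psi g = psi h"
  using assms psi_eq_iff unfolding lnb_def by blast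

lemma psi_eqD:
  assumes "g \<in> Lns" "h \<in> Lns" "psi g = psi h" "g \<noteq> h"
  shows "\<exists>P\<in>Pts. \<exists>Q\<in>Pts. P \<noteq> Q \<and> I P g \<and> I P h \<and> I Q g \<and> I Q h"
  using assms psi_eq_iff unfolding lnb_def by blast

text \<open>In the notation of Algorithm 1: fibre x with traces x is the affine plane at x,
  traces_over x y is the parallel class pi(x, y), and lines_over y are the rows of the array
  on y.\<close>

definition fibre :: "'a \<Rightarrow> 'p set" where
  "fibre x = {Q \<in> Pts. phi Q = x}"

definition trace :: "'a \<Rightarrow> 'l \<Rightarrow> 'p set" where
  "trace x g = {Q \<in> fibre x. I Q g}"

definition traces :: "'a \<Rightarrow> 'p set set" where
  "traces x = {trace x g | g. g \<in> Lns \<and> trace x g \<noteq> {}}"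

definition traces_over :: "'a \<Rightarrow> 'b \<Rightarrow> 'p set set" where
  "traces_over x y = {trace x g | g. g \<in> Lns \<and> psi g = y}"

definition lines_over :: "'b \<Rightarrow> 'l set" where
  "lines_over y = {g \<in> Lns. psi g = y}"

lemma nbhd_points_eq_fibre: "P \<in> Pts \<Longrightarrow> nbhd_points Pts Lns I P = fibre (phi P)"
  unfolding nbhd_points_def fibre_def using phi_eq_iff by blast

lemma nbhd_lines_eq_traces: "P \<in> Pts \<Longrightarrow> nbhd_lines Pts Lns I P = traces (phi P)"
  unfolding nbhd_lines_def traces_def restr_line_def trace_def nbhd_points_eq_fibre ..

lemma fibre_affine_plane: "x \<in> Pts' \<Longrightarrow> finite_affine_plane (fibre x) (traces x)"
proof
  assume "x \<in> Pts'"
  then obtain P where "P \<in> Pts" "x = phi P" using phi_image by blast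
  then show "affine_plane (fibre x) (traces x) (\<lambda>x l. x \<in> l)"
    using nbhd_affine nbhd_points_eq_fibre nbhd_lines_eq_traces by metis
  show "traces x \<subseteq> Pow (fibre x)" unfolding traces_def trace_def by blast
  show "finite (fibre x)" unfolding fibre_def using finite_points by simp
qed

text \<open>Join a point over x to a point over some z off psi g by a line h; then g and h meet,
  and their images meet only in x.\<close>

lemma trace_nonempty:
  assumes g: "g \<in> Lns" and x: "x \<in> Pts'" "I' x (psi g)"
  shows "\<exists>Q\<in>Pts. phi Q = x \<and> I Q g"
proof -
  obtain z where z: "z \<in> Pts'" "\<not> I' z (psi g)" using target.point_off_line psi_in g by blast
  obtain Q0 Z where QZ: "Q0 \<in> Pts" "phi Q0 = x" "Z \<in> Pts" "phi Z = z" using x z phi_image by blast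
  obtain h where h: "h \<in> Lns" "I Q0 h" "I Z h" using points_joined QZ by blast
  have xh: "I' x (psi h)" "I' z (psi h)" using incidence_preserved h QZ by auto
  obtain R where R: "R \<in> Pts" "I R g" "I R h" using lines_meet g h by blast
  have "phi R = x"
    using target.point_eqI[of "psi g" "psi h" "phi R" x] psi_in g h phi_in R x xh z
      incidence_preserved by fastforce
  then show ?thesis using R by blast
qed

lemma trace_nonempty_iff: "g \<in> Lns \<Longrightarrow> x \<in> Pts' \<Longrightarrow> trace x g \<noteq> {} \<longleftrightarrow> I' x (psi g)"
  using trace_nonempty incidence_preserved unfolding trace_def fibre_def by blast

lemma trace_in_traces: "g \<in> Lns \<Longrightarrow> x \<in> Pts' \<Longrightarrow> I' x (psi g) \<Longrightarrow> trace x g \<in> traces x"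
  using trace_nonempty_iff unfolding traces_def by blast

lemma trace_eqI:
  assumes g: "g \<in> Lns" and h: "h \<in> Lns" and "psi g = psi h" and x: "x \<in> Pts'"
    and Q: "Q \<in> trace x g" "Q \<in> trace x h"
  shows "trace x g = trace x h"
proof (cases "g = h")
  case False
  interpret fibre: finite_affine_plane "fibre x" "traces x" using fibre_affine_plane[OF x] .
  obtain P1 P2 where P: "P1 \<in> Pts" "P2 \<in> Pts" "P1 \<noteq> P2" "I P1 g" "I P1 h" "I P2 g" "I P2 h"
    using psi_eqD[OF g h \<open>psi g = psi h\<close> False] by blast
  have Q': "Q \<in> Pts" "phi Q = x" "I Q g" "I Q h" using Q unfolding trace_def fibre_def by auto
  have "phi P1 = x" "phi P2 = x"
    using phi_eqI[of _ Q g h] P Q' g h False by metis+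
  then have "P1 \<in> trace x g \<inter> trace x h" "P2 \<in> trace x g \<inter> trace x h"
    using P unfolding trace_def fibre_def by auto
  moreover have "trace x g \<in> traces x" "trace x h \<in> traces x"
    using Q g h unfolding traces_def by blast+
  ultimately show ?thesis using fibre.line_unique P(3) by blast
qed simp

lemma trace_Int_nonempty:
  assumes g: "g \<in> Lns" and h: "h \<in> Lns" and "psi g \<noteq> psi h" and x: "x \<in> Pts'"
    and "I' x (psi g)" "I' x (psi h)"
  shows "trace x g \<inter> trace x h \<noteq> {}"
proof -
  obtain R where R: "R \<in> Pts" "I R g" "I R h" using lines_meet g h by blast
  have "phi R = x"
    using target.point_eqI[of "psi g" "psi h" "phi R" x] psi_in g h phi_in R x assms(3,5,6)
      incidence_preserved by blast
  then show ?thesis using R unfolding trace_def fibre_def by blast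
qed

lemma trace_neqI:
  assumes g: "g \<in> Lns" and h: "h \<in> Lns" and ne: "psi g \<noteq> psi h" and x: "x \<in> Pts'"
    and xg: "I' x (psi g)"
  shows "trace x g \<noteq> trace x h"
proof
  interpret fibre: finite_affine_plane "fibre x" "traces x" using fibre_affine_plane[OF x] .
  assume e: "trace x g = trace x h"
  obtain P Q where "P \<noteq> Q" "P \<in> trace x g" "Q \<in> trace x g"
    using fibre.two_points_on_line trace_in_traces[OF g x xg] by blast
  then have "psi g = psi h" using psi_eqI[of g h P Q] g h e unfolding trace_def fibre_def by auto
  then show False using ne by simp
qed

lemma par_trace_iff:
  assumes x: "x \<in> Pts'" and g: "g \<in> Lns" "I' x (psi g)" and h: "h \<in> Lns" "I' x (psi h)"
  shows "finite_affine_plane.par (trace x g) (trace x h) \<longleftrightarrow> psi g = psi h"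
proof -
  interpret fibre: finite_affine_plane "fibre x" "traces x" using fibre_affine_plane[OF x] .
  show ?thesis
    using trace_eqI[OF g(1) h(1) _ x] trace_Int_nonempty[OF g(1) h(1) _ x g(2) h(2)]
      trace_neqI[OF g(1) h(1) _ x g(2)] unfolding fibre.par_def by blast
qed

lemma pclass_trace:
  assumes x: "x \<in> Pts'" and g: "g \<in> Lns" "I' x (psi g)"
  shows "finite_affine_plane.pclass (traces x) (trace x g) = traces_over x (psi g)"
proof -
  interpret fibre: finite_affine_plane "fibre x" "traces x" using fibre_affine_plane[OF x] .
  note par_iff = par_trace_iff[OF x g]
  show ?thesis
  proof
    show "fibre.pclass (trace x g) \<subseteq> traces_over x (psi g)"
    proof
      fix k assume "k \<in> fibre.pclass (trace x g)"
      then have "k \<in> traces x" "fibre.par (trace x g) k" unfolding fibre.pclass_def by auto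
      then obtain h where h: "h \<in> Lns" "k = trace x h" "trace x h \<noteq> {}"
        and "fibre.par (trace x g) k" unfolding traces_def by blast
      then have "psi h = psi g" using par_iff trace_nonempty_iff[OF h(1) x] by auto
      then show "k \<in> traces_over x (psi g)" using h unfolding traces_over_def by blast
    qed
    show "traces_over x (psi g) \<subseteq> fibre.pclass (trace x g)"
    proof
      fix k assume "k \<in> traces_over x (psi g)"
      then obtain h where h: "h \<in> Lns" "k = trace x h" "psi h = psi g"
        unfolding traces_over_def by blast
      then have "k \<in> traces x" "fibre.par (trace x g) k"
        using g trace_in_traces[OF h(1) x] par_iff by auto
      then show "k \<in> fibre.pclass (trace x g)" unfolding fibre.pclass_def by blast
    qed
  qed
qed

lemma traces_over_bij:
  assumes x: "x \<in> Pts'"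
  shows "bij_betw (traces_over x) (lines_through Lns' I' x)
    (parallel_classes (fibre x) (traces x) (\<lambda>x l. x \<in> l))"
proof -
  interpret fibre: finite_affine_plane "fibre x" "traces x" using fibre_affine_plane[OF x] .
  have lift: "\<exists>g\<in>Lns. psi g = y \<and> trace x g \<in> traces x \<and> fibre.pclass (trace x g) = traces_over x y"
    if "y \<in> lines_through Lns' I' x" for y
    using that psi_image trace_in_traces[OF _ x] pclass_trace[OF x]
    unfolding lines_through_def by fastforce
  show ?thesis
    unfolding fibre.parallel_classes_eq bij_betw_def
  proof
    show "inj_on (traces_over x) (lines_through Lns' I' x)"
    proof (rule inj_onI)
      fix y1 y2
      assume y: "y1 \<in> lines_through Lns' I' x" "y2 \<in> lines_through Lns' I' x"
        and eq: "traces_over x y1 = traces_over x y2"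
      obtain g1 g2 where g: "g1 \<in> Lns" "psi g1 = y1" "trace x g1 \<in> traces x"
        "fibre.pclass (trace x g1) = traces_over x y1" "g2 \<in> Lns" "psi g2 = y2"
        "trace x g2 \<in> traces x" "fibre.pclass (trace x g2) = traces_over x y2"
        using lift[OF y(1)] lift[OF y(2)] by blast
      then have "fibre.par (trace x g1) (trace x g2)"
        using eq fibre.pclass_eq_iff by metis
      then show "y1 = y2"
        using par_trace_iff[OF x g(1) _ g(5)] g y unfolding lines_through_def by auto
    qed
    show "traces_over x ` lines_through Lns' I' x = fibre.pclass ` traces x"
    proof
      show "traces_over x ` lines_through Lns' I' x \<subseteq> fibre.pclass ` traces x"
        using lift by (metis image_subsetI rev_image_eqI)
      show "fibre.pclass ` traces x \<subseteq> traces_over x ` lines_through Lns' I' x"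
      proof
        fix \<pi> assume "\<pi> \<in> fibre.pclass ` traces x"
        then obtain g where g: "g \<in> Lns" "trace x g \<noteq> {}" "\<pi> = fibre.pclass (trace x g)"
          unfolding traces_def by blast
        then have "I' x (psi g)" using trace_nonempty_iff[OF g(1) x] by simp
        then show "\<pi> \<in> traces_over x ` lines_through Lns' I' x"
          using pclass_trace[OF x g(1)] g psi_in unfolding lines_through_def by auto
      qed
    qed
  qed
qed

definition local_order :: "'a \<Rightarrow> nat" where
  "local_order x = finite_affine_plane.order (traces x)"

lemma card_lines_through_local_order:
  "x \<in> Pts' \<Longrightarrow> card (lines_through Lns' I' x) = local_order x + 1"
  using bij_betw_same_card[OF traces_over_bij] finite_affine_plane.card_pclasses_order
    finite_affine_plane.parallel_classes_eq fibre_affine_plane unfolding local_order_def by metis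

lemma card_traces_over:
  assumes "x \<in> Pts'" "y \<in> Lns'" "I' x y"
  shows "card (traces_over x y) = local_order x"
proof -
  have "traces_over x y \<in> parallel_classes (fibre x) (traces x) (\<lambda>x l. x \<in> l)"
    using traces_over_bij[OF assms(1)] assms(2,3) unfolding bij_betw_def lines_through_def by blast
  then show ?thesis
    using finite_affine_plane.card_pclass_order finite_affine_plane.parallel_classes_eq
      fibre_affine_plane[OF assms(1)] unfolding local_order_def by metis
qed

text \<open>Two lines sharing a point in each of two different fibres are neighbours, contradicting
  phi_eqI.\<close>

lemma line_eq_if_traces_eq:
  assumes g: "g \<in> Lns" and h: "h \<in> Lns"
    and x: "x1 \<in> Pts'" "x2 \<in> Pts'" "x1 \<noteq> x2" "I' x1 (psi g)" "I' x2 (psi g)"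
    and eq: "trace x1 g = trace x1 h" "trace x2 g = trace x2 h"
  shows "g = h"
proof -
  obtain A B where AB: "A \<in> Pts" "phi A = x1" "I A g" "B \<in> Pts" "phi B = x2" "I B g"
    using trace_nonempty[OF g] x by metis
  then have "A \<in> trace x1 h" "B \<in> trace x2 h"
    using eq unfolding trace_def fibre_def by auto
  then have "I A h" "I B h" unfolding trace_def by auto
  then show "g = h" using phi_eqI[of A B g h] AB g h x(3) by auto
qed

text \<open>Any two traces over y are realised by a single line over y: join a point of each.\<close>

lemma ex_line_over_with_traces:
  assumes y: "y \<in> Lns'" and x: "x1 \<in> Pts'" "x2 \<in> Pts'" "x1 \<noteq> x2" "I' x1 y" "I' x2 y"
    and g: "g1 \<in> lines_over y" "g2 \<in> lines_over y"
  shows "\<exists>h\<in>lines_over y. trace x1 h = trace x1 g1 \<and> trace x2 h = trace x2 g2"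
proof -
  have g': "g1 \<in> Lns" "psi g1 = y" "g2 \<in> Lns" "psi g2 = y"
    using g unfolding lines_over_def by auto
  obtain A B where AB: "A \<in> Pts" "phi A = x1" "I A g1" "B \<in> Pts" "phi B = x2" "I B g2"
    using trace_nonempty g' x by metis
  obtain h where h: "h \<in> Lns" "I A h" "I B h" using points_joined AB by blast
  then have "I' x1 (psi h)" "I' x2 (psi h)" using incidence_preserved AB by auto
  then have "psi h = y" using target.line_eqI[of x1 x2 "psi h" y] x y psi_in[OF h(1)] by blast
  moreover have "A \<in> trace x1 h \<inter> trace x1 g1" "B \<in> trace x2 h \<inter> trace x2 g2"
    using AB h unfolding trace_def fibre_def by auto
  ultimately have "h \<in> lines_over y" "trace x1 h = trace x1 g1" "trace x2 h = trace x2 g2"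
    using trace_eqI[OF h(1) g'(1) _ x(1)] trace_eqI[OF h(1) g'(3) _ x(2)] g' h(1)
    unfolding lines_over_def by auto
  then show ?thesis by blast
qed

lemma lines_over_bij:
  assumes y: "y \<in> Lns'" and x: "x1 \<in> Pts'" "x2 \<in> Pts'" "x1 \<noteq> x2" "I' x1 y" "I' x2 y"
  shows "bij_betw (\<lambda>g. (trace x1 g, trace x2 g)) (lines_over y) (traces_over x1 y \<times> traces_over x2 y)"
  unfolding bij_betw_def
proof
  show "inj_on (\<lambda>g. (trace x1 g, trace x2 g)) (lines_over y)"
    using line_eq_if_traces_eq x unfolding lines_over_def inj_on_def by auto
  show "(\<lambda>g. (trace x1 g, trace x2 g)) ` lines_over y = traces_over x1 y \<times> traces_over x2 y"
  proof
    show "(\<lambda>g. (trace x1 g, trace x2 g)) ` lines_over y \<subseteq> traces_over x1 y \<times> traces_over x2 y"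
      unfolding lines_over_def traces_over_def by blast
    show "traces_over x1 y \<times> traces_over x2 y \<subseteq> (\<lambda>g. (trace x1 g, trace x2 g)) ` lines_over y"
    proof
      fix t assume "t \<in> traces_over x1 y \<times> traces_over x2 y"
      then obtain g1 g2 where "g1 \<in> lines_over y" "g2 \<in> lines_over y"
        "t = (trace x1 g1, trace x2 g2)"
        unfolding traces_over_def lines_over_def by blast
      then show "t \<in> (\<lambda>g. (trace x1 g, trace x2 g)) ` lines_over y"
        using ex_line_over_with_traces[OF y x] by (metis (no_types, lifting) image_eqI)
    qed
  qed
qed

lemma card_lines_over:
  assumes "y \<in> Lns'" "x1 \<in> Pts'" "x2 \<in> Pts'" "x1 \<noteq> x2" "I' x1 y" "I' x2 y"
  shows "card (lines_over y) = local_order x1 * local_order x2"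
  using bij_betw_same_card[OF lines_over_bij[OF assms]] card_traces_over assms
  by (simp add: card_cartesian_product)

text \<open>Counting the lines over y through three points of y shows that all fibres have
  the same order.\<close>

lemma local_order_eq:
  assumes x12: "x1 \<in> Pts'" "x2 \<in> Pts'"
  shows "local_order x1 = local_order x2"
proof (cases "x1 = x2")
  case False
  obtain y where y: "y \<in> Lns'" "I' x1 y" "I' x2 y"
    using target.join_exists x12 False by blast
  obtain z where z: "z \<in> Pts'" "\<not> I' z y" using target.point_off_line y(1) by blast
  have "card (points_on Pts' I' y) = local_order z + 1"
    using target.card_points_on_eq_card_lines_through[OF y(1) z] card_lines_through_local_order z
    by simp
  moreover have "2 \<le> local_order z"
    using finite_affine_plane.order_ge_2 fibre_affine_plane z(1) unfolding local_order_def by blast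
  ultimately have "\<not> points_on Pts' I' y \<subseteq> {x1, x2}"
    using card_mono[of "{x1, x2}" "points_on Pts' I' y"] card_2_iff[of "{x1, x2}"] False by auto
  then obtain x3 where x3: "x3 \<in> Pts'" "I' x3 y" "x3 \<noteq> x1" "x3 \<noteq> x2"
    unfolding points_on_def by auto
  have "local_order x1 * local_order x3 = local_order x2 * local_order x3"
    using card_lines_over[OF y(1) x12(1) x3(1) x3(3)[symmetric] y(2) x3(2)]
      card_lines_over[OF y(1) x12(2) x3(1) x3(4)[symmetric] y(3) x3(2)] by auto
  moreover have "0 < local_order x3"
    using finite_affine_plane.order_ge_2 fibre_affine_plane x3(1) unfolding local_order_def
    by fastforce
  ultimately show ?thesis by simp
qed simp

definition order :: nat where
  "order = local_order (SOME x. x \<in> Pts')"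

lemma local_order_eq_order: "x \<in> Pts' \<Longrightarrow> local_order x = order"
  unfolding order_def using local_order_eq target.points_nonempty by (metis some_in_eq)

lemma order_ge_2: "2 \<le> order"
  using finite_affine_plane.order_ge_2 fibre_affine_plane local_order_eq_order target.points_nonempty
  unfolding local_order_def by fastforce

lemma card_points_on_order: "y \<in> Lns' \<Longrightarrow> card (points_on Pts' I' y) = order + 1"
  using target.point_off_line target.card_points_on_eq_card_lines_through
    card_lines_through_local_order local_order_eq_order by metis

lemma projective_plane_of_order: "projective_plane_of_order order Pts' Lns' I'"
  unfolding projective_plane_of_order_def
  using target card_points_on_order card_lines_through_local_order local_order_eq_order by simp

lemma two_points_on:
  assumes "y \<in> Lns'"
  obtains x1 x2 where "x1 \<in> Pts'" "x2 \<in> Pts'" "x1 \<noteq> x2" "I' x1 y" "I' x2 y"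
proof -
  have "finite (points_on Pts' I' y)"
    using finite_points phi_image unfolding points_on_def by auto
  moreover have "\<not> card (points_on Pts' I' y) \<le> Suc 0"
    using card_points_on_order[OF assms] order_ge_2 by simp
  ultimately obtain x1 x2 where "x1 \<in> points_on Pts' I' y" "x2 \<in> points_on Pts' I' y" "x1 \<noteq> x2"
    using card_le_Suc0_iff_eq by blast
  then show ?thesis using that unfolding points_on_def by blast
qed

lemma card_lines_over_order: "y \<in> Lns' \<Longrightarrow> card (lines_over y) = order ^ 2"
  by (metis two_points_on card_lines_over local_order_eq_order power2_eq_square)

text \<open>The symbols of every array are {..<order}: enum_traces x y is the bijection beta(x, y)
  onto pi(x, y), and trace_index y g x is the entry of row g in column x.\<close>

definition enum_traces :: "'a \<Rightarrow> 'b \<Rightarrow> nat \<Rightarrow> 'p set" where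
  "enum_traces x y = (SOME f. bij_betw f {..<order} (traces_over x y))"

definition trace_index :: "'b \<Rightarrow> 'l \<Rightarrow> 'a \<Rightarrow> nat" where
  "trace_index y g x = inv_into {..<order} (enum_traces x y) (trace x g)"

lemma enum_traces_bij:
  assumes "x \<in> Pts'" "y \<in> Lns'" "I' x y"
  shows "bij_betw (enum_traces x y) {..<order} (traces_over x y)"
proof -
  have "finite (traces_over x y)"
    using finite_lines unfolding traces_over_def by simp
  moreover have "card (traces_over x y) = order"
    using card_traces_over[OF assms] local_order_eq_order[OF assms(1)] by simp
  ultimately have "\<exists>f. bij_betw f {..<order} (traces_over x y)"
    using ex_bij_betw_nat_finite by (metis atLeast0LessThan)
  then show ?thesis unfolding enum_traces_def by (rule someI_ex)
qed

lemma trace_index: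
  assumes "x \<in> Pts'" "y \<in> Lns'" "I' x y" "g \<in> lines_over y"
  shows "trace_index y g x < order" "enum_traces x y (trace_index y g x) = trace x g"
proof -
  have t: "trace x g \<in> enum_traces x y ` {..<order}"
    using enum_traces_bij[OF assms(1-3)] assms(4)
    unfolding bij_betw_def lines_over_def traces_over_def by blast
  show "trace_index y g x < order"
    using inv_into_into[OF t] unfolding trace_index_def by simp
  show "enum_traces x y (trace_index y g x) = trace x g"
    using f_inv_into_f[OF t] unfolding trace_index_def .
qed

lemma trace_index_eq_iff:
  assumes "x \<in> Pts'" "y \<in> Lns'" "I' x y" "g \<in> lines_over y" "s < order"
  shows "trace_index y g x = s \<longleftrightarrow> trace x g = enum_traces x y s"
  using trace_index[OF assms(1-4)] bij_betw_inv_into_left[OF enum_traces_bij[OF assms(1-3)]] assms(5)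
  unfolding trace_index_def by fastforce

text \<open>Orthogonality is lines_over_bij read through the bijections enum_traces.\<close>

lemma lines_over_orthogonal_array:
  assumes y: "y \<in> Lns'"
  shows "orthogonal_array (order + 1) order (lines_over y) (points_on Pts' I' y) {..<order}
    (trace_index y)"
  unfolding orthogonal_array_def
proof (intro conjI ballI impI)
  show "finite (lines_over y)" using finite_lines unfolding lines_over_def by simp
  show "finite (points_on Pts' I' y)" using finite_points phi_image unfolding points_on_def by auto
  show "card (lines_over y) = order ^ 2" using card_lines_over_order[OF y] .
  show "card (points_on Pts' I' y) = order + 1" using card_points_on_order[OF y] .
  show "finite {..<order}" "card {..<order} = order" by simp_all
next
  fix g x assume "g \<in> lines_over y" "x \<in> points_on Pts' I' y"
  then show "trace_index y g x \<in> {..<order}" using trace_index(1) y unfolding points_on_def by simp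
next
  fix x1 x2 s1 s2
  assume x: "x1 \<in> points_on Pts' I' y" "x2 \<in> points_on Pts' I' y" "x1 \<noteq> x2"
    and s: "s1 \<in> {..<order}" "s2 \<in> {..<order}"
  have x': "x1 \<in> Pts'" "I' x1 y" "x2 \<in> Pts'" "I' x2 y" using x unfolding points_on_def by auto
  note bij = lines_over_bij[OF y x'(1,3) x(3) x'(2,4)]
  have "(enum_traces x1 y s1, enum_traces x2 y s2) \<in> traces_over x1 y \<times> traces_over x2 y"
    using enum_traces_bij[OF x'(1) y x'(2)] enum_traces_bij[OF x'(3) y x'(4)] s
    unfolding bij_betw_def by auto
  then obtain g where g: "g \<in> lines_over y"
    "(trace x1 g, trace x2 g) = (enum_traces x1 y s1, enum_traces x2 y s2)"
    using bij unfolding bij_betw_def by (metis (no_types, lifting) imageE)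
  have index_iff: "trace_index y h x1 = s1 \<and> trace_index y h x2 = s2 \<longleftrightarrow>
      (trace x1 h, trace x2 h) = (enum_traces x1 y s1, enum_traces x2 y s2)"
    if "h \<in> lines_over y" for h
    using that trace_index_eq_iff[OF x'(1) y x'(2)] trace_index_eq_iff[OF x'(3) y x'(4)] s by simp
  show "\<exists>!g. g \<in> lines_over y \<and> trace_index y g x1 = s1 \<and> trace_index y g x2 = s2"
  proof (rule ex1I[of _ g])
    show "g \<in> lines_over y \<and> trace_index y g x1 = s1 \<and> trace_index y g x2 = s2"
      using g index_iff by blast
    fix h assume h: "h \<in> lines_over y \<and> trace_index y h x1 = s1 \<and> trace_index y h x2 = s2"
    then have "(trace x1 h, trace x2 h) = (trace x1 g, trace x2 g)" using g index_iff by metis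
    then show "h = g" using bij h g(1) unfolding bij_betw_def by (blast dest: inj_onD)
  qed
qed

lemma alg1_data_fibres:
  "alg1_data order Pts' Lns' I' fibre traces (\<lambda>y. {..<order}) lines_over trace_index traces_over
    enum_traces"
  unfolding alg1_data_def
proof (intro conjI ballI impI)
  fix x assume x: "x \<in> Pts'"
  interpret fibre: finite_affine_plane "fibre x" "traces x" using fibre_affine_plane[OF x] .
  show "affine_plane_of_order order (fibre x) (traces x) (\<lambda>x l. x \<in> l)"
    using fibre.affine_plane_of_order local_order_eq_order[OF x] unfolding local_order_def by simp
  show "traces x \<subseteq> Pow (fibre x)" using fibre.lines_subset .
  show "bij_betw (traces_over x) (lines_through Lns' I' x)
    (parallel_classes (fibre x) (traces x) (\<lambda>x l. x \<in> l))" using traces_over_bij[OF x] .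
qed (use projective_plane_of_order lines_over_orthogonal_array enum_traces_bij in auto)

lemma alg1_line_eq:
  assumes g: "g \<in> Lns"
  shows "(\<Union>x\<in>points_on Pts' I' (psi g). {x} \<times> enum_traces x (psi g) (trace_index (psi g) g x)) =
    (\<lambda>Q. (phi Q, Q)) ` {Q \<in> Pts. I Q g}"
proof -
  have "enum_traces x (psi g) (trace_index (psi g) g x) = trace x g"
    if "x \<in> points_on Pts' I' (psi g)" for x
    using that trace_index(2) psi_in g unfolding points_on_def lines_over_def by simp
  then have "(\<Union>x\<in>points_on Pts' I' (psi g). {x} \<times> enum_traces x (psi g) (trace_index (psi g) g x))
      = (\<Union>x\<in>points_on Pts' I' (psi g). {x} \<times> trace x g)"
    by simp
  also have "\<dots> = (\<lambda>Q. (phi Q, Q)) ` {Q \<in> Pts. I Q g}"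
    using phi_in incidence_preserved g unfolding trace_def fibre_def points_on_def by auto
  finally show ?thesis .
qed

lemma alg1_lines_eq:
  "alg1_lines Pts' Lns' I' lines_over trace_index enum_traces =
    (\<lambda>g. (\<lambda>Q. (phi Q, Q)) ` {Q \<in> Pts. I Q g}) ` Lns"
proof -
  have "alg1_lines Pts' Lns' I' lines_over trace_index enum_traces =
    (\<lambda>g. \<Union>x\<in>points_on Pts' I' (psi g). {x} \<times> enum_traces x (psi g) (trace_index (psi g) g x)) ` Lns"
    unfolding alg1_lines_def lines_over_def using psi_in by blast
  then show ?thesis using alg1_line_eq by simp
qed

lemma line_eq_if_same_points:
  assumes g: "g \<in> Lns" and h: "h \<in> Lns" and eq: "{Q \<in> Pts. I Q g} = {Q \<in> Pts. I Q h}"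
  shows "g = h"
proof -
  obtain x1 x2 where "x1 \<in> Pts'" "x2 \<in> Pts'" "x1 \<noteq> x2" "I' x1 (psi g)" "I' x2 (psi g)"
    using two_points_on psi_in[OF g] by metis
  moreover have "trace x g = trace x h" for x
    using eq unfolding trace_def fibre_def by blast
  ultimately show ?thesis using line_eq_if_traces_eq[OF g h] by blast
qed

lemma isomorphic_alg1:
  "isomorphic Pts Lns I (alg1_points Pts' fibre)
    (alg1_lines Pts' Lns' I' lines_over trace_index enum_traces) (\<lambda>x l. x \<in> l)"
proof -
  let ?f = "\<lambda>Q. (phi Q, Q)"
  have inj: "inj_on ?f Pts" by (rule inj_onI) simp
  have "bij_betw ?f Pts (alg1_points Pts' fibre)"
    unfolding bij_betw_def alg1_points_def fibre_def using inj phi_in by auto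
  moreover have "bij_betw (\<lambda>g. ?f ` {Q \<in> Pts. I Q g}) Lns
      (alg1_lines Pts' Lns' I' lines_over trace_index enum_traces)"
    unfolding alg1_lines_eq bij_betw_def
    using line_eq_if_same_points inj_on_image_eq_iff[OF inj] by (auto intro!: inj_onI)
  moreover have "I P g \<longleftrightarrow> ?f P \<in> ?f ` {Q \<in> Pts. I Q g}" if "P \<in> Pts" for P g
    using that by auto
  ultimately show ?thesis unfolding isomorphic_def by blast
qed

lemma ex_alg1_construction:
  "\<exists>m (PP :: 'a set) (PL :: 'b set) PI (AP :: 'a \<Rightarrow> 'p set) AL (Sig :: 'b \<Rightarrow> nat set)
      (Rows :: 'b \<Rightarrow> 'l set) OA pi beta.
     m \<ge> 2 \<and> alg1_data m PP PL PI AP AL Sig Rows OA pi beta \<and>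
     isomorphic Pts Lns I (alg1_points PP AP) (alg1_lines PP PL PI Rows OA beta) (\<lambda>x L. x \<in> L)"
  by (intro exI conjI) (rule order_ge_2 alg1_data_fibres isomorphic_alg1)+

end

lemma uniform2_hjelmslev_epimorphism:
  fixes Pts :: "'p set" and Lns :: "'l set"
  assumes "finite Pts" "finite Lns" "uniform2_proj_hjelmslev Pts Lns I"
  shows "\<exists>(Pts' :: 'p set) (Lns' :: 'l set) I' phi psi.
    hjelmslev_epimorphism Pts Lns I Pts' Lns' I' phi psi"
proof -
  have "proj_hjelmslev_plane Pts Lns I" using assms(3) unfolding uniform2_proj_hjelmslev_def by blast
  note H = this[unfolded proj_hjelmslev_plane_def]
  obtain Pts' :: "'p set" and Lns' :: "'l set" and I' phi psi where "projective_plane Pts' Lns' I'"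
    "phi ` Pts = Pts'" "psi ` Lns = Lns'" "\<forall>P\<in>Pts. \<forall>g\<in>Lns. I P g \<longrightarrow> I' (phi P) (psi g)"
    "\<forall>P\<in>Pts. \<forall>Q\<in>Pts. phi P = phi Q \<longleftrightarrow> pnb Pts Lns I P Q"
    "\<forall>g\<in>Lns. \<forall>h\<in>Lns. psi g = psi h \<longleftrightarrow> lnb Pts Lns I g h"
    using H[THEN conjunct2, THEN conjunct2] by blast
  moreover note H[THEN conjunct1] H[THEN conjunct2, THEN conjunct1]
  moreover have "\<forall>P\<in>Pts. affine_plane (nbhd_points Pts Lns I P) (nbhd_lines Pts Lns I P) (\<lambda>x l. x \<in> l)"
    using assms(3) unfolding uniform2_proj_hjelmslev_def uniform1_affine_hjelmslev_def by blast
  ultimately have "hjelmslev_epimorphism Pts Lns I Pts' Lns' I' phi psi"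
    using assms(1,2) by unfold_locales auto
  then show ?thesis by blast
qed

section \<open>Copies on the natural numbers\<close>

lemma hjelmslev_epimorphism_transport:
  assumes "hjelmslev_epimorphism Pts Lns I Pts' Lns' I' phi psi"
    and "incidence_iso Pts Lns I P2 L2 I2 e c"
    and "incidence_iso Pts' Lns' I' P2' L2' I2' e' c'"
  shows "hjelmslev_epimorphism P2 L2 I2 P2' L2' I2'
    (e' \<circ> phi \<circ> inv_into Pts e) (c' \<circ> psi \<circ> inv_into Lns c)"
proof -
  interpret H: hjelmslev_epimorphism Pts Lns I Pts' Lns' I' phi psi by fact
  interpret S: incidence_iso Pts Lns I P2 L2 I2 e c by fact
  interpret T: incidence_iso Pts' Lns' I' P2' L2' I2' e' c' by fact
  let ?phi = "e' \<circ> phi \<circ> inv_into Pts e" and ?psi = "c' \<circ> psi \<circ> inv_into Lns c"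
  have phi: "p \<in> Pts \<Longrightarrow> ?phi (e p) = e' (phi p)" for p
    using inv_into_f_f[OF S.inj_points] by simp
  have psi: "g \<in> Lns \<Longrightarrow> ?psi (c g) = c' (psi g)" for g
    using inv_into_f_f[OF S.inj_lines] by simp
  show ?thesis
  proof
    show "finite P2" "finite L2"
      using H.finite_points H.finite_lines S.points_eq S.lines_eq by simp_all
    show "\<exists>g\<in>L2. I2 u g \<and> I2 v g" if "u \<in> P2" "v \<in> P2" for u v
      using that H.points_joined by (auto simp: S.mem_points_iff S.lines_eq S.incidence_iff)
    show "\<exists>u\<in>P2. I2 u g \<and> I2 u h" if "g \<in> L2" "h \<in> L2" for g h
      using that H.lines_meet by (auto simp: S.points_eq S.mem_lines_iff S.incidence_iff)
    show "projective_plane P2' L2' I2'" using T.projective_plane_iff H.target by simp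
    show "?phi ` P2 = P2'"
      using phi H.phi_image[symmetric] S.points_eq T.points_eq
      by (simp add: image_image cong: image_cong)
    show "?psi ` L2 = L2'"
      using psi H.psi_image[symmetric] S.lines_eq T.lines_eq
      by (simp add: image_image cong: image_cong)
    show "I2' (?phi u) (?psi g)" if "u \<in> P2" "g \<in> L2" "I2 u g" for u g
      using that phi psi H.incidence_preserved H.phi_in H.psi_in
      by (auto simp: S.mem_points_iff S.mem_lines_iff S.incidence_iff T.incidence_iff)
    show "?phi u = ?phi v \<longleftrightarrow> pnb P2 L2 I2 u v" if "u \<in> P2" "v \<in> P2" for u v
      using that phi H.phi_eq_iff H.phi_in
      by (auto simp: S.mem_points_iff S.pnb_iff inj_on_eq_iff[OF T.inj_points])
    show "?psi g = ?psi h \<longleftrightarrow> lnb P2 L2 I2 g h" if "g \<in> L2" "h \<in> L2" for g h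
      using that psi H.psi_eq_iff H.psi_in
      by (auto simp: S.mem_lines_iff S.lnb_iff inj_on_eq_iff[OF T.inj_lines])
    show "affine_plane (nbhd_points P2 L2 I2 u) (nbhd_lines P2 L2 I2 u) (\<lambda>x l. x \<in> l)"
      if "u \<in> P2" for u
      using that H.nbhd_affine S.nbhd_affine_iff by (auto simp: S.mem_points_iff)
  qed
qed

lemma ex_incidence_iso_nat:
  fixes P :: "'p set" and L :: "'l set"
  assumes "finite P" "finite L"
  shows "\<exists>(P2 :: nat set) (L2 :: nat set) I2 e c. incidence_iso P L I P2 L2 I2 e c"
proof -
  obtain e :: "'p \<Rightarrow> nat" where e: "inj_on e P"
    using finite_imp_inj_to_nat_seg[OF assms(1)] by blast
  obtain c :: "'l \<Rightarrow> nat" where c: "inj_on c L"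
    using finite_imp_inj_to_nat_seg[OF assms(2)] by blast
  show ?thesis by (intro exI) (rule incidence_iso_inv_into[OF e c])
qed

lemma hjelmslev_epimorphism_nat:
  assumes "hjelmslev_epimorphism Pts Lns I Pts' Lns' I' phi psi"
  shows "\<exists>(P2 :: nat set) (L2 :: nat set) I2 (P2' :: nat set) (L2' :: nat set) I2' phi2 psi2.
    hjelmslev_epimorphism P2 L2 I2 P2' L2' I2' phi2 psi2 \<and> isomorphic Pts Lns I P2 L2 I2"
proof -
  interpret H: hjelmslev_epimorphism Pts Lns I Pts' Lns' I' phi psi by fact
  obtain P2 L2 I2 e c where S: "incidence_iso Pts Lns I (P2 :: nat set) (L2 :: nat set) I2 e c"
    using ex_incidence_iso_nat[OF H.finite_points H.finite_lines] by blast
  have "finite Pts'" "finite Lns'"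
    using H.finite_points H.finite_lines H.phi_image H.psi_image by blast+
  then obtain P2' L2' I2' e' c'
    where T: "incidence_iso Pts' Lns' I' (P2' :: nat set) (L2' :: nat set) I2' e' c'"
    using ex_incidence_iso_nat by metis
  show ?thesis
    using hjelmslev_epimorphism_transport[OF assms S T] incidence_iso.isomorphic[OF S] by blast
qed

theorem mainTheorem2:
  fixes Pts :: "'p set" and Lns :: "'l set" and I :: "'p \<Rightarrow> 'l \<Rightarrow> bool"
  assumes "finite Pts" and "finite Lns"
    and "uniform2_proj_hjelmslev Pts Lns I"
  shows "\<exists>(m::nat) (PP::nat set) (PL::nat set) (PI::nat \<Rightarrow> nat \<Rightarrow> bool)
           (AP::nat \<Rightarrow> nat set) (AL::nat \<Rightarrow> nat set set)
           (Sig::nat \<Rightarrow> nat set) (Rows::nat \<Rightarrow> nat set) (OA::nat \<Rightarrow> nat \<Rightarrow> nat \<Rightarrow> nat)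
           (pi::nat \<Rightarrow> nat \<Rightarrow> nat set set) (beta::nat \<Rightarrow> nat \<Rightarrow> nat \<Rightarrow> nat set).
           m \<ge> 2 \<and> alg1_data m PP PL PI AP AL Sig Rows OA pi beta \<and>
           isomorphic Pts Lns I (alg1_points PP AP) (alg1_lines PP PL PI Rows OA beta)
             (\<lambda>x L. x \<in> L)"
proof -
  obtain Pts' :: "'p set" and Lns' :: "'l set" and I' phi psi
    where "hjelmslev_epimorphism Pts Lns I Pts' Lns' I' phi psi"
    using uniform2_hjelmslev_epimorphism[OF assms] by blast
  then obtain P2 L2 I2 P2' L2' I2' phi2 psi2
    where H: "hjelmslev_epimorphism (P2 :: nat set) (L2 :: nat set) I2 (P2' :: nat set)
        (L2' :: nat set) I2' phi2 psi2"
      and iso: "isomorphic Pts Lns I P2 L2 I2"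
    using hjelmslev_epimorphism_nat by metis
  show ?thesis
    using hjelmslev_epimorphism.ex_alg1_construction[OF H] isomorphic_trans[OF iso] by blast
qed

end
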